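(* Skeptic can weakly force the event \[ E_4:=\Bigl\{\xi:\ \limsup_{n\to\infty}|s_n|<\infty\ \ \text{or}\ \ \bigl(\limsup_{n\to\infty}s_n=\infty\ \text{and}\ \liminf_{n\to\infty}s_n=-\infty\bigr)\Bigr\}. \]
   Context: Fair-coin game: in rounds $n=1,2,\dots$ Skeptic announces $M_n\in\mathbb{R}$ (depending only on $x_1,\dots,x_{n-1}$), then Reality announces $x_n\in\{-1,1\}$. A path is an infinite sequence $\xi=x_1x_2\cdots\in\{-1,1\}^{\mathbb{N}}$, and $\Omega$ is the set of paths. We write $s_n:=x_1+\cdots+x_n$, with $s_0=0$. The capital process of a strategy with zero initial capital is $\mathcal{K}^{\mathcal{P}}_n=\sum_{k=1}^nM_kx_k$. Skeptic weakly forces $E\subseteq\Omega$ if some strategy $\mathcal{P}$ has $\mathcal{K}^{\mathcal{P}}_n(\xi)\ge-1$ for all $\xi\in\Omega$ and $n\ge0$, and $\limsup_n\mathcal{K}^{\mathcal{P}}_n(\xi)=\infty$ for every $\xi\notin E$. *)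

theory Defs
  imports "HOL-Analysis.Analysis"
begin

text \<open>A path is a sequence xi with xi k = x_(k+1) in {-1,1} (0-based indexing of rounds).\<close>
definition paths :: "(nat \<Rightarrow> real) set" where
  "paths = {xi. \<forall>k. xi k \<in> {-1, 1}}"

definition psum :: "(nat \<Rightarrow> real) \<Rightarrow> nat \<Rightarrow> real" where
  "psum xi n = (\<Sum>k<n. xi k)"

text \<open>A strategy maps the history (x_1,...,x_(n-1)) to the move M_n.
  Capital with zero initial capital: K_n = sum_(k=1)^n M_k x_k.\<close>
definition capital :: "(real list \<Rightarrow> real) \<Rightarrow> (nat \<Rightarrow> real) \<Rightarrow> nat \<Rightarrow> real" where
  "capital P xi n = (\<Sum>k<n. P (map xi [0..<k]) * xi k)"

definition weakly_forces :: "(nat \<Rightarrow> real) set \<Rightarrow> bool" where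
  "weakly_forces E \<longleftrightarrow> (\<exists>P :: real list \<Rightarrow> real.
     (\<forall>xi\<in>paths. \<forall>n. capital P xi n \<ge> -1) \<and>
     (\<forall>xi\<in>paths. xi \<notin> E \<longrightarrow> limsup (\<lambda>n. ereal (capital P xi n)) = \<infinity>))"

definition E4 :: "(nat \<Rightarrow> real) set" where
  "E4 = {xi. limsup (\<lambda>n. ereal \<bar>psum xi n\<bar>) < \<infinity> \<or>
             (limsup (\<lambda>n. ereal (psum xi n)) = \<infinity> \<and> liminf (\<lambda>n. ereal (psum xi n)) = -\<infinity>)}"

end

theory Submission
  imports Defs
begin

text \<open>Let \<open>L\<^sub>n = - min\<^sub>k\<^sub>\<le>\<^sub>n s\<^sub>k\<close> be the deficit of the path. Betting \<open>1 / ((L\<^sub>n + 1) (L\<^sub>n + 2))\<close>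
  on \<open>x\<^sub>n = 1\<close> keeps the capital equal to
  \<open>(s\<^sub>n + L\<^sub>n) / ((L\<^sub>n + 1) (L\<^sub>n + 2)) + 1 / (L\<^sub>n + 1) - 1 > -1\<close>: a step to a new minimum costs exactly
  the current stake, and these costs add up to at most \<open>\<Sum>\<^sub>j 1 / ((j + 1) (j + 2)) = 1\<close>. If the path is
  bounded below, \<open>L\<^sub>n\<close> stays bounded, so the capital grows linearly in \<open>s\<^sub>n\<close> and is unbounded as
  soon as \<open>|s\<^sub>n|\<close> is. Outside \<open>E4\<close>, \<open>|s\<^sub>n|\<close> is unbounded and \<open>s\<^sub>n\<close> is bounded below or above;
  averaging this strategy with its mirror image, which plays it against \<open>-\<xi>\<close>, covers both cases.\<close>

lemma limsup_ereal_eq_PInf_iff: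
  "limsup (\<lambda>n. ereal (f n)) = \<infinity> \<longleftrightarrow> (\<forall>C. \<exists>\<^sub>F n in sequentially. C \<le> f n)"
proof
  assume lim: "limsup (\<lambda>n. ereal (f n)) = \<infinity>"
  show "\<forall>C. \<exists>\<^sub>F n in sequentially. C \<le> f n"
  proof
    fix C
    have "\<not> (\<forall>\<^sub>F n in sequentially. f n < C)"
    proof
      assume "\<forall>\<^sub>F n in sequentially. f n < C"
      then have "\<forall>\<^sub>F n in sequentially. ereal (f n) \<le> ereal C"
        by (rule eventually_mono) simp
      from Limsup_bounded[OF this] lim show False by simp
    qed
    then show "\<exists>\<^sub>F n in sequentially. C \<le> f n"
      by (simp add: not_eventually not_less)
  qed
next
  assume freq: "\<forall>C. \<exists>\<^sub>F n in sequentially. C \<le> f n"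
  show "limsup (\<lambda>n. ereal (f n)) = \<infinity>"
  proof (rule ccontr)
    assume "limsup (\<lambda>n. ereal (f n)) \<noteq> \<infinity>"
    then obtain r :: nat where "limsup (\<lambda>n. ereal (f n)) < ereal r"
      using less_PInf_Ex_of_nat by blast
    then have "\<forall>\<^sub>F n in sequentially. f n < r"
      by (auto dest: Limsup_lessD)
    with freq show False
      by (metis (mono_tags) eventually_mono frequently_def not_le)
  qed
qed

lemma liminf_ereal_neq_MInf_imp_bdd_below:
  assumes "liminf (\<lambda>n. ereal (f n)) \<noteq> -\<infinity>"
  shows "bdd_below (range f)"
proof -
  obtain r where "ereal r < liminf (\<lambda>n. ereal (f n))"
    using assms ereal_dense2[of "-\<infinity>"] by auto
  then have "\<forall>\<^sub>F n in sequentially. r < f n"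
    by (auto dest: less_LiminfD)
  then obtain N where N: "\<And>n. n \<ge> N \<Longrightarrow> r < f n"
    unfolding eventually_sequentially by blast
  have "range f \<subseteq> f ` {..<N} \<union> f ` {N..}"
  proof
    fix y assume "y \<in> range f"
    then obtain n where "y = f n" by blast
    then show "y \<in> f ` {..<N} \<union> f ` {N..}" by (cases "n < N") auto
  qed
  moreover have "bdd_below (f ` {N..})"
    using N by (intro bdd_belowI[of _ r]) (auto intro: less_imp_le)
  ultimately show ?thesis
    by (meson bdd_below_Un bdd_below_finite bdd_below_mono finite_imageI finite_lessThan)
qed

lemma psum_0 [simp]: "psum xi 0 = 0"
  by (simp add: psum_def)

lemma psum_Suc: "psum xi (Suc n) = psum xi n + xi n"
  by (simp add: psum_def)

lemma psum_cong: "(\<And>k. k < n \<Longrightarrow> f k = g k) \<Longrightarrow> psum f n = psum g n"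
  unfolding psum_def by (rule sum.cong) auto

lemma psum_uminus: "psum (\<lambda>k. - xi k) n = - psum xi n"
  by (simp add: psum_def sum_negf)

lemma paths_uminus: "xi \<in> paths \<Longrightarrow> (\<lambda>k. - xi k) \<in> paths"
  by (auto simp: paths_def)

lemma psum_Ints:
  assumes "xi \<in> paths"
  shows "psum xi n \<in> \<int>"
proof -
  from assms have "xi k = -1 \<or> xi k = 1" for k
    by (simp add: paths_def)
  then have "xi k \<in> \<int>" for k
    by (metis Ints_1 Ints_minus)
  then show ?thesis
    unfolding psum_def by (intro Ints_sum)
qed

definition deficit :: "(nat \<Rightarrow> real) \<Rightarrow> nat \<Rightarrow> real" where
  "deficit xi n = Max ((\<lambda>k. - psum xi k) ` {..n})"

lemma deficit_0 [simp]: "deficit xi 0 = 0"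
  by (simp add: deficit_def)

lemma deficit_Suc: "deficit xi (Suc n) = max (- psum xi (Suc n)) (deficit xi n)"
  by (simp add: deficit_def atMost_Suc)

lemma deficit_nonneg: "0 \<le> deficit xi n"
  unfolding deficit_def by (rule Max_ge_iff[THEN iffD2]) (auto intro: bexI[of _ 0])

lemma psum_add_deficit_nonneg: "0 \<le> psum xi n + deficit xi n"
proof -
  have "- psum xi n \<le> deficit xi n"
    unfolding deficit_def by (rule Max_ge) auto
  then show ?thesis by simp
qed

lemma deficit_le: "(\<And>k. b \<le> psum xi k) \<Longrightarrow> deficit xi n \<le> - b"
  unfolding deficit_def by (subst Max_le_iff) fastforce+

lemma deficit_cong: "(\<And>k. k < n \<Longrightarrow> f k = g k) \<Longrightarrow> deficit f n = deficit g n"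
  unfolding deficit_def
  by (intro arg_cong[where f = Max] image_cong refl arg_cong[where f = uminus] psum_cong) auto

lemma deficit_Ints: "xi \<in> paths \<Longrightarrow> deficit xi n \<in> \<int>"
  by (induction n) (simp_all add: deficit_Suc max_def psum_Ints)

lemma deficit_Suc_path:
  assumes "xi \<in> paths"
  shows "deficit xi (Suc n) =
    (if psum xi n + deficit xi n = 0 \<and> xi n = -1 then deficit xi n + 1 else deficit xi n)"
proof -
  have x: "xi n = -1 \<or> xi n = 1" using assms by (auto simp: paths_def)
  obtain z where z: "psum xi n + deficit xi n = of_int z"
    using assms psum_Ints deficit_Ints Ints_add by (metis Ints_cases)
  moreover have "0 \<le> z" using psum_add_deficit_nonneg[of xi n] z by simp
  ultimately have "psum xi n + deficit xi n = 0 \<or> 1 \<le> psum xi n + deficit xi n"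
    by (cases "z = 0") simp_all
  with x show ?thesis by (auto simp: deficit_Suc psum_Suc)
qed

definition stake :: "real \<Rightarrow> real" where
  "stake L = 1 / ((L + 1) * (L + 2))"

lemma stake_pos: "0 \<le> L \<Longrightarrow> 0 < stake L"
  by (simp add: stake_def)

lemma stake_antimono: "0 \<le> L \<Longrightarrow> L \<le> B \<Longrightarrow> stake B \<le> stake L"
  unfolding stake_def by (intro divide_left_mono mult_mono mult_pos_pos) auto

lemma stake_telescoping: "0 \<le> L \<Longrightarrow> stake L = 1 / (L + 1) - 1 / (L + 2)"
  by (simp add: stake_def divide_simps)

text \<open>Since \<open>stake\<close> telescopes, \<open>1 / (L + 1)\<close> is the sum of all stakes still to be lost at
  future new minima \<open>- L - 1, - L - 2, \<dots>\<close>\<close>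
definition potential :: "real \<Rightarrow> real \<Rightarrow> real" where
  "potential s L = (s + L) * stake L + 1 / (L + 1) - 1"

lemma potential_add_stake: "potential s L + stake L * x = potential (s + x) L"
  by (simp add: potential_def algebra_simps)

lemma potential_new_minimum: "0 \<le> L \<Longrightarrow> potential (- L) L - stake L = potential (- L - 1) (L + 1)"
  by (simp add: potential_def stake_telescoping add.commute)

lemma potential_gt: "0 \<le> L \<Longrightarrow> 0 \<le> s + L \<Longrightarrow> -1 < potential s L"
  unfolding potential_def using stake_pos[of L] by (simp add: add_nonneg_pos)

lemma potential_ge_linear:
  assumes "0 \<le> L" "L \<le> B" "0 \<le> s"
  shows "s * stake B - 1 \<le> potential s L"
proof -
  have "s * stake B \<le> s * stake L" using assms by (intro mult_left_mono stake_antimono)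
  also have "\<dots> \<le> (s + L) * stake L" using assms stake_pos[of L] by (intro mult_right_mono) auto
  finally have "s * stake B \<le> (s + L) * stake L" .
  moreover have "0 \<le> 1 / (L + 1)" using assms by simp
  ultimately show ?thesis unfolding potential_def by linarith
qed

lemma capital_Suc: "capital P xi (Suc n) = capital P xi n + P (map xi [0..<n]) * xi n"
  by (simp add: capital_def)

lemma capital_antisymmetrize:
  "capital (\<lambda>h. (P h - P (map uminus h)) / 2) xi n = (capital P xi n + capital P (\<lambda>k. - xi k) n) / 2"
  unfolding capital_def sum.distrib[symmetric] sum_divide_distrib
  by (rule sum.cong) (simp_all add: comp_def algebra_simps)

definition deficit_strategy :: "real list \<Rightarrow> real" where
  "deficit_strategy h = stake (deficit ((!) h) (length h))"

lemma capital_deficit_strategy: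
  assumes "xi \<in> paths"
  shows "capital deficit_strategy xi n = potential (psum xi n) (deficit xi n)"
proof (induction n)
  case 0
  show ?case by (simp add: capital_def potential_def stake_def)
next
  case (Suc n)
  have "deficit ((!) (map xi [0..<n])) n = deficit xi n"
    by (rule deficit_cong) simp
  then have "deficit_strategy (map xi [0..<n]) = stake (deficit xi n)"
    by (simp add: deficit_strategy_def)
  then have "capital deficit_strategy xi (Suc n) =
      potential (psum xi n) (deficit xi n) + stake (deficit xi n) * xi n"
    by (simp add: capital_Suc Suc.IH)
  also have "\<dots> = potential (psum xi (Suc n)) (deficit xi (Suc n))"
  proof (cases "psum xi n + deficit xi n = 0 \<and> xi n = -1")
    case True
    then have "psum xi n = - deficit xi n" by linarith
    with True show ?thesis
      using potential_new_minimum[OF deficit_nonneg, of xi n]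
      by (simp add: deficit_Suc_path[OF assms] psum_Suc)
  next
    case False
    then have "deficit xi (Suc n) = deficit xi n"
      by (simp add: deficit_Suc_path[OF assms])
    then show ?thesis by (simp add: psum_Suc potential_add_stake)
  qed
  finally show ?case .
qed

definition two_sided_strategy :: "real list \<Rightarrow> real" where
  "two_sided_strategy h = (deficit_strategy h - deficit_strategy (map uminus h)) / 2"

lemma capital_two_sided_strategy:
  "capital two_sided_strategy xi n =
    (capital deficit_strategy xi n + capital deficit_strategy (\<lambda>k. - xi k) n) / 2"
  unfolding two_sided_strategy_def[abs_def] by (rule capital_antisymmetrize)

lemma capital_two_sided_strategy_uminus:
  "capital two_sided_strategy (\<lambda>k. - xi k) n = capital two_sided_strategy xi n"
  by (simp add: capital_two_sided_strategy)

lemma capital_deficit_strategy_gt: "xi \<in> paths \<Longrightarrow> -1 < capital deficit_strategy xi n"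
  by (simp add: capital_deficit_strategy potential_gt deficit_nonneg psum_add_deficit_nonneg)

lemma capital_two_sided_strategy_gt: "xi \<in> paths \<Longrightarrow> -1 < capital two_sided_strategy xi n"
  using capital_deficit_strategy_gt[of xi n] capital_deficit_strategy_gt[of "\<lambda>k. - xi k" n]
  by (simp add: capital_two_sided_strategy paths_uminus)

lemma limsup_capital_two_sided_strategy:
  assumes xi: "xi \<in> paths"
    and below: "liminf (\<lambda>n. ereal (psum xi n)) \<noteq> -\<infinity>"
    and unbounded: "limsup (\<lambda>n. ereal \<bar>psum xi n\<bar>) = \<infinity>"
  shows "limsup (\<lambda>n. ereal (capital two_sided_strategy xi n)) = \<infinity>"
proof -
  obtain b where b: "\<And>k. b \<le> psum xi k"
    using liminf_ereal_neq_MInf_imp_bdd_below[OF below] by (auto simp: bdd_below_def)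
  define B where "B = - b"
  have "0 \<le> B" using b[of 0] by (simp add: B_def)
  have large: "M \<le> capital two_sided_strategy xi n"
    if n: "max (B + 1) ((2 * M + 2) / stake B) \<le> \<bar>psum xi n\<bar>" for M n
  proof -
    have "0 \<le> psum xi n" using n b[of n] by (auto simp: B_def abs_if split: if_split_asm)
    with n have "(2 * M + 2) / stake B \<le> psum xi n" by simp
    then have "2 * M + 2 \<le> psum xi n * stake B"
      using stake_pos[OF \<open>0 \<le> B\<close>] by (simp add: pos_divide_le_eq)
    moreover have "psum xi n * stake B - 1 \<le> capital deficit_strategy xi n"
      using potential_ge_linear[OF deficit_nonneg deficit_le[OF b] \<open>0 \<le> psum xi n\<close>]
      by (simp add: capital_deficit_strategy[OF xi] B_def)
    moreover have "-1 < capital deficit_strategy (\<lambda>k. - xi k) n"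
      using capital_deficit_strategy_gt[OF paths_uminus[OF xi]] .
    ultimately show ?thesis by (simp add: capital_two_sided_strategy)
  qed
  show ?thesis
    unfolding limsup_ereal_eq_PInf_iff
  proof
    fix M
    show "\<exists>\<^sub>F n in sequentially. M \<le> capital two_sided_strategy xi n"
      using unbounded[unfolded limsup_ereal_eq_PInf_iff, rule_format]
      by (rule frequently_elim1) (rule large)
  qed
qed

theorem corollary2:
  shows "weakly_forces E4"
  unfolding weakly_forces_def
proof (intro exI[of _ two_sided_strategy] conjI ballI allI impI)
  fix xi n
  assume "xi \<in> paths"
  then show "-1 \<le> capital two_sided_strategy xi n"
    using capital_two_sided_strategy_gt less_imp_le by blast
next
  fix xi
  assume xi: "xi \<in> paths" and "xi \<notin> E4"
  then have unbounded: "limsup (\<lambda>n. ereal \<bar>psum xi n\<bar>) = \<infinity>"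
    and one_sided: "liminf (\<lambda>n. ereal (psum xi n)) \<noteq> -\<infinity> \<or> limsup (\<lambda>n. ereal (psum xi n)) \<noteq> \<infinity>"
    by (auto simp: E4_def)
  from one_sided show "limsup (\<lambda>n. ereal (capital two_sided_strategy xi n)) = \<infinity>"
  proof
    assume "liminf (\<lambda>n. ereal (psum xi n)) \<noteq> -\<infinity>"
    then show ?thesis using limsup_capital_two_sided_strategy[OF xi _ unbounded] by blast
  next
    assume "limsup (\<lambda>n. ereal (psum xi n)) \<noteq> \<infinity>"
    then have "liminf (\<lambda>n. ereal (psum (\<lambda>k. - xi k) n)) \<noteq> -\<infinity>"
      using ereal_Liminf_uminus[of sequentially "\<lambda>n. ereal (psum xi n)"] by (simp add: psum_uminus)
    moreover have "limsup (\<lambda>n. ereal \<bar>psum (\<lambda>k. - xi k) n\<bar>) = \<infinity>"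
      using unbounded by (simp add: psum_uminus)
    ultimately show ?thesis
      using limsup_capital_two_sided_strategy[OF paths_uminus[OF xi]]
      by (simp add: capital_two_sided_strategy_uminus)
  qed
qed

end
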